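(* Let $\mathscr{A}$ be a monoidal category with unit object $I$, let $T=(T,\mu,\eta)$ be a monoidal monad on $\mathscr{A}$, and let $(G,\zeta,\delta,\varepsilon)$ be an opmonoidal mixed opwreath around $T$. Then the monoid $\mathrm{mkl}(G,\zeta,T)(I,I)=\mathscr{A}(GI,TI)$ of endomorphisms of $I$ in the category $\mathrm{mkl}(G,\zeta,T)$ is commutative.
   Context: A monoidal monad on $\mathscr{A}$ is a monad $T$ with a lax monoidal structure $\phi_{X,Y}\colon TX\otimes TY\to T(X\otimes Y)$, $\phi_0\colon I\to TI$ such that $\mu$ and $\eta$ are monoidal natural transformations. The Kleisli category $\mathscr{A}_T$ (objects of $\mathscr{A}$, morphisms $X\to Y$ are morphisms $X\to TY$ of $\mathscr{A}$, composite of $f\colon X\to TY$ and $g\colon Y\to TZ$ is $\mu_Z\circ Tg\circ f$) is then monoidal with tensor of objects as in $\mathscr{A}$, tensor of $f\colon X\to TY$, $f'\colon X'\to TY'$ equal to $\phi_{Y,Y'}\circ(f\otimes f')$, and unit $I$. A mixed opwreath around $T$ is an endofunctor $G$ of $\mathscr{A}$ with natural transformations $\zeta\colon GT\Rightarrow TG$, $\delta\colon G\Rightarrow TGG$, $\varepsilon\colon G\Rightarrow T$ satisfying: $\zeta\circ G\mu=\mu G\circ T\zeta\circ\zeta T$; $\zeta\circ G\eta=\eta G$; $\mu\circ\varepsilon T=\mu\circ T\varepsilon\circ\zeta$; $\mu GG\circ T\zeta G\circ TG\zeta\circ\delta T=\mu GG\circ T\delta\circ\zeta$; $\mu GGG\circ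 T\delta G\circ\delta=\mu GGG\circ T\zeta GG\circ TG\delta\circ\delta$; $\mu G\circ T\varepsilon G\circ\delta=\eta G$; $\mu G\circ T\zeta\circ TG\varepsilon\circ\delta=\eta G$ (juxtaposition denotes composition/whiskering of functors and transformations). It induces a lifted comonad $\bar G$ on $\mathscr{A}_T$: $\bar G X=GX$, $\bar G f=\zeta_Y\circ Gf\colon GX\to TGY$ for $f\colon X\to TY$, comultiplication $\bar\delta_X=\delta_X\colon GX\to TGGX$ and counit $\bar\varepsilon_X=\varepsilon_X\colon GX\to TX$ (as Kleisli morphisms). The mixed opwreath is opmonoidal when $\bar G$ is equipped with an opmonoidal comonad structure on the monoidal category $\mathscr{A}_T$, i.e. $\bar G$ is an opmonoidal functor (natural Kleisli morphisms $\psi_{X,X'}\colon G(X\otimes X')\to T(GX\otimes GX')$ and $\psi_0\colon GI\to TI$, coassociative and counital) and $\bar\delta$, $\bar\varepsilon$ are opmonoidal natural transformations. The category $\mathrm{mkl}(G,\zeta,T)$ has the objects of $\mathscr{A}$, hom-sets $\mathrm{mkl}(G,\zeta,T)(X,Y)=\mathscr{A}(GX,TY)$, identity on $X$ equal to $\varepsilon_X$, and composite of $f\colon GX\to TY$ and $g\colon GY\to TZ$ given by the wreath convolution $\mu^{(3)}_Z\circ TTg\circ T\zeta_Y\circ TGf\circ\delta_X$, where $\mu^{(3)}=\mu\circ T\mu\colon TTT\Rightarrow T$. *)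

theory Defs
  imports Main
begin

text \<open>A (small-presentation) monoidal category: a set of objects, a set of arrows,
  source/target, identities, composition (cmp g f is g after f, meaningful when the
  target of f is the source of g), tensor on objects and arrows, unit object,
  associator and left/right unitors.\<close>

record ('o, 'm) moncat =
  obj :: "'o set"
  arr :: "'m set"
  src :: "'m \<Rightarrow> 'o"
  tgt :: "'m \<Rightarrow> 'o"
  idt :: "'o \<Rightarrow> 'm"
  cmp :: "'m \<Rightarrow> 'm \<Rightarrow> 'm"
  tO  :: "'o \<Rightarrow> 'o \<Rightarrow> 'o"
  tA  :: "'m \<Rightarrow> 'm \<Rightarrow> 'm"
  unt :: "'o"
  asc :: "'o \<Rightarrow> 'o \<Rightarrow> 'o \<Rightarrow> 'm"
  lu  :: "'o \<Rightarrow> 'm"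
  ru  :: "'o \<Rightarrow> 'm"

definition hom :: "('o, 'm) moncat \<Rightarrow> 'o \<Rightarrow> 'o \<Rightarrow> 'm set" where
  "hom A X Y = {f \<in> arr A. src A f = X \<and> tgt A f = Y}"

definition is_iso :: "('o, 'm) moncat \<Rightarrow> 'm \<Rightarrow> bool" where
  "is_iso A f \<longleftrightarrow> f \<in> arr A \<and>
     (\<exists>g \<in> hom A (tgt A f) (src A f).
        cmp A g f = idt A (src A f) \<and> cmp A f g = idt A (tgt A f))"

locale monoidal_category =
  fixes A :: "('o, 'm) moncat"
  assumes arr_obj: "\<And>f. f \<in> arr A \<Longrightarrow> src A f \<in> obj A \<and> tgt A f \<in> obj A"
    and id_hom: "\<And>X. X \<in> obj A \<Longrightarrow> idt A X \<in> hom A X X"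
    and cmp_hom: "\<And>f g. f \<in> arr A \<Longrightarrow> g \<in> arr A \<Longrightarrow> tgt A f = src A g \<Longrightarrow>
                     cmp A g f \<in> hom A (src A f) (tgt A g)"
    and id_left: "\<And>f. f \<in> arr A \<Longrightarrow> cmp A (idt A (tgt A f)) f = f"
    and id_right: "\<And>f. f \<in> arr A \<Longrightarrow> cmp A f (idt A (src A f)) = f"
    and cmp_assoc: "\<And>f g h. f \<in> arr A \<Longrightarrow> g \<in> arr A \<Longrightarrow> h \<in> arr A \<Longrightarrow>
                     tgt A f = src A g \<Longrightarrow> tgt A g = src A h \<Longrightarrow>
                     cmp A h (cmp A g f) = cmp A (cmp A h g) f"
    and tO_obj: "\<And>X Y. X \<in> obj A \<Longrightarrow> Y \<in> obj A \<Longrightarrow> tO A X Y \<in> obj A"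
    and tA_hom: "\<And>f g X Y X' Y'. f \<in> hom A X Y \<Longrightarrow> g \<in> hom A X' Y' \<Longrightarrow>
                     tA A f g \<in> hom A (tO A X X') (tO A Y Y')"
    and tA_id: "\<And>X Y. X \<in> obj A \<Longrightarrow> Y \<in> obj A \<Longrightarrow>
                     tA A (idt A X) (idt A Y) = idt A (tO A X Y)"
    and tA_cmp: "\<And>f g f' g'. f \<in> arr A \<Longrightarrow> g \<in> arr A \<Longrightarrow> f' \<in> arr A \<Longrightarrow> g' \<in> arr A \<Longrightarrow>
                     tgt A f = src A g \<Longrightarrow> tgt A f' = src A g' \<Longrightarrow>
                     tA A (cmp A g f) (cmp A g' f') = cmp A (tA A g g') (tA A f f')"
    and unt_obj: "unt A \<in> obj A"
    and asc_hom: "\<And>X Y Z. X \<in> obj A \<Longrightarrow> Y \<in> obj A \<Longrightarrow> Z \<in> obj A \<Longrightarrow>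
                     asc A X Y Z \<in> hom A (tO A (tO A X Y) Z) (tO A X (tO A Y Z))"
    and asc_iso: "\<And>X Y Z. X \<in> obj A \<Longrightarrow> Y \<in> obj A \<Longrightarrow> Z \<in> obj A \<Longrightarrow> is_iso A (asc A X Y Z)"
    and asc_nat: "\<And>f1 f2 f3 X1 X2 X3 Y1 Y2 Y3.
                     f1 \<in> hom A X1 Y1 \<Longrightarrow> f2 \<in> hom A X2 Y2 \<Longrightarrow> f3 \<in> hom A X3 Y3 \<Longrightarrow>
                     cmp A (asc A Y1 Y2 Y3) (tA A (tA A f1 f2) f3)
                       = cmp A (tA A f1 (tA A f2 f3)) (asc A X1 X2 X3)"
    and lu_hom: "\<And>X. X \<in> obj A \<Longrightarrow> lu A X \<in> hom A (tO A (unt A) X) X"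
    and lu_iso: "\<And>X. X \<in> obj A \<Longrightarrow> is_iso A (lu A X)"
    and lu_nat: "\<And>f X Y. f \<in> hom A X Y \<Longrightarrow>
                     cmp A (lu A Y) (tA A (idt A (unt A)) f) = cmp A f (lu A X)"
    and ru_hom: "\<And>X. X \<in> obj A \<Longrightarrow> ru A X \<in> hom A (tO A X (unt A)) X"
    and ru_iso: "\<And>X. X \<in> obj A \<Longrightarrow> is_iso A (ru A X)"
    and ru_nat: "\<And>f X Y. f \<in> hom A X Y \<Longrightarrow>
                     cmp A (ru A Y) (tA A f (idt A (unt A))) = cmp A f (ru A X)"
    and pentagon: "\<And>W X Y Z. W \<in> obj A \<Longrightarrow> X \<in> obj A \<Longrightarrow> Y \<in> obj A \<Longrightarrow> Z \<in> obj A \<Longrightarrow>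
                     cmp A (tA A (idt A W) (asc A X Y Z))
                       (cmp A (asc A W (tO A X Y) Z) (tA A (asc A W X Y) (idt A Z)))
                     = cmp A (asc A W X (tO A Y Z)) (asc A (tO A W X) Y Z)"
    and triangle: "\<And>X Y. X \<in> obj A \<Longrightarrow> Y \<in> obj A \<Longrightarrow>
                     cmp A (tA A (idt A X) (lu A Y)) (asc A X (unt A) Y)
                     = tA A (ru A X) (idt A Y)"

section \<open>Monoidal monads\<close>

text \<open>A monad (T, mu, eta) together with a lax monoidal structure phi, phi0.\<close>

record ('o, 'm) monmonad =
  TO   :: "'o \<Rightarrow> 'o"
  TA   :: "'m \<Rightarrow> 'm"
  mu   :: "'o \<Rightarrow> 'm"
  eta  :: "'o \<Rightarrow> 'm"
  phi  :: "'o \<Rightarrow> 'o \<Rightarrow> 'm"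
  phi0 :: "'m"

definition endofunctor :: "('o, 'm) moncat \<Rightarrow> ('o \<Rightarrow> 'o) \<Rightarrow> ('m \<Rightarrow> 'm) \<Rightarrow> bool" where
  "endofunctor A FO FA \<longleftrightarrow>
     (\<forall>X \<in> obj A. FO X \<in> obj A) \<and>
     (\<forall>X Y f. f \<in> hom A X Y \<longrightarrow> FA f \<in> hom A (FO X) (FO Y)) \<and>
     (\<forall>X \<in> obj A. FA (idt A X) = idt A (FO X)) \<and>
     (\<forall>f \<in> arr A. \<forall>g \<in> arr A. tgt A f = src A g \<longrightarrow> FA (cmp A g f) = cmp A (FA g) (FA f))"

locale monoidal_monad = monoidal_category A for A :: "('o, 'm) moncat" +
  fixes T :: "('o, 'm) monmonad"
  assumes T_functor: "endofunctor A (TO T) (TA T)"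
    and mu_hom: "\<And>X. X \<in> obj A \<Longrightarrow> mu T X \<in> hom A (TO T (TO T X)) (TO T X)"
    and eta_hom: "\<And>X. X \<in> obj A \<Longrightarrow> eta T X \<in> hom A X (TO T X)"
    and mu_nat: "\<And>f X Y. f \<in> hom A X Y \<Longrightarrow>
                   cmp A (mu T Y) (TA T (TA T f)) = cmp A (TA T f) (mu T X)"
    and eta_nat: "\<And>f X Y. f \<in> hom A X Y \<Longrightarrow>
                   cmp A (eta T Y) f = cmp A (TA T f) (eta T X)"
    and mu_assoc: "\<And>X. X \<in> obj A \<Longrightarrow>
                   cmp A (mu T X) (TA T (mu T X)) = cmp A (mu T X) (mu T (TO T X))"
    and mu_eta_left: "\<And>X. X \<in> obj A \<Longrightarrow> cmp A (mu T X) (eta T (TO T X)) = idt A (TO T X)"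
    and mu_eta_right: "\<And>X. X \<in> obj A \<Longrightarrow> cmp A (mu T X) (TA T (eta T X)) = idt A (TO T X)"
    and phi_hom: "\<And>X Y. X \<in> obj A \<Longrightarrow> Y \<in> obj A \<Longrightarrow>
                   phi T X Y \<in> hom A (tO A (TO T X) (TO T Y)) (TO T (tO A X Y))"
    and phi0_hom: "phi0 T \<in> hom A (unt A) (TO T (unt A))"
    and phi_nat: "\<And>f f' X Y X' Y'. f \<in> hom A X Y \<Longrightarrow> f' \<in> hom A X' Y' \<Longrightarrow>
                   cmp A (phi T Y Y') (tA A (TA T f) (TA T f'))
                     = cmp A (TA T (tA A f f')) (phi T X X')"
    and phi_assoc: "\<And>X Y Z. X \<in> obj A \<Longrightarrow> Y \<in> obj A \<Longrightarrow> Z \<in> obj A \<Longrightarrow>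
                   cmp A (TA T (asc A X Y Z))
                     (cmp A (phi T (tO A X Y) Z) (tA A (phi T X Y) (idt A (TO T Z))))
                   = cmp A (phi T X (tO A Y Z))
                     (cmp A (tA A (idt A (TO T X)) (phi T Y Z)) (asc A (TO T X) (TO T Y) (TO T Z)))"
    and phi_lunit: "\<And>X. X \<in> obj A \<Longrightarrow>
                   cmp A (TA T (lu A X)) (cmp A (phi T (unt A) X) (tA A (phi0 T) (idt A (TO T X))))
                   = lu A (TO T X)"
    and phi_runit: "\<And>X. X \<in> obj A \<Longrightarrow>
                   cmp A (TA T (ru A X)) (cmp A (phi T X (unt A)) (tA A (idt A (TO T X)) (phi0 T)))
                   = ru A (TO T X)"
    and eta_monoidal: "\<And>X Y. X \<in> obj A \<Longrightarrow> Y \<in> obj A \<Longrightarrow>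
                   cmp A (phi T X Y) (tA A (eta T X) (eta T Y)) = eta T (tO A X Y)"
    and eta_monoidal0: "eta T (unt A) = phi0 T"
    \<comment> \<open>mu is a monoidal natural transformation (TT carries the composite lax structure)\<close>
    and mu_monoidal: "\<And>X Y. X \<in> obj A \<Longrightarrow> Y \<in> obj A \<Longrightarrow>
                   cmp A (mu T (tO A X Y)) (cmp A (TA T (phi T X Y)) (phi T (TO T X) (TO T Y)))
                   = cmp A (phi T X Y) (tA A (mu T X) (mu T Y))"
    and mu_monoidal0: "cmp A (mu T (unt A)) (cmp A (TA T (phi0 T)) (phi0 T)) = phi0 T"

section \<open>The Kleisli category A_T (its operations, as arrows of A)\<close>

text \<open>A Kleisli arrow X -> Y is an arrow X -> TY of A. The Kleisli category is monoidal with
  the tensor of objects as in A, Kleisli tensor of arrows phi o (f (x) f'), unit I, and structural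
  isomorphisms the images eta o a, eta o l, eta o r of those of A under the free functor.\<close>

definition kl_comp :: "('o, 'm) moncat \<Rightarrow> ('o, 'm) monmonad \<Rightarrow> 'o \<Rightarrow> 'm \<Rightarrow> 'm \<Rightarrow> 'm" where
  "kl_comp A T Z g f = cmp A (mu T Z) (cmp A (TA T g) f)"

definition kl_tens :: "('o, 'm) moncat \<Rightarrow> ('o, 'm) monmonad \<Rightarrow> 'o \<Rightarrow> 'o \<Rightarrow> 'm \<Rightarrow> 'm \<Rightarrow> 'm" where
  "kl_tens A T Y Y' f f' = cmp A (phi T Y Y') (tA A f f')"

definition kl_asc :: "('o, 'm) moncat \<Rightarrow> ('o, 'm) monmonad \<Rightarrow> 'o \<Rightarrow> 'o \<Rightarrow> 'o \<Rightarrow> 'm" where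
  "kl_asc A T X Y Z = cmp A (eta T (tO A X (tO A Y Z))) (asc A X Y Z)"

definition kl_lu :: "('o, 'm) moncat \<Rightarrow> ('o, 'm) monmonad \<Rightarrow> 'o \<Rightarrow> 'm" where
  "kl_lu A T X = cmp A (eta T X) (lu A X)"

definition kl_ru :: "('o, 'm) moncat \<Rightarrow> ('o, 'm) monmonad \<Rightarrow> 'o \<Rightarrow> 'm" where
  "kl_ru A T X = cmp A (eta T X) (ru A X)"

section \<open>Opmonoidal mixed opwreaths\<close>

record ('o, 'm) opwreath =
  GO    :: "'o \<Rightarrow> 'o"
  GA    :: "'m \<Rightarrow> 'm"
  zeta  :: "'o \<Rightarrow> 'm"
  delta :: "'o \<Rightarrow> 'm"
  eps   :: "'o \<Rightarrow> 'm"
  psi   :: "'o \<Rightarrow> 'o \<Rightarrow> 'm"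
  psi0  :: "'m"

text \<open>The lifted comonad on A_T acts on a Kleisli arrow f : X -> TY by zeta_Y o Gf.\<close>

definition Gbar :: "('o, 'm) moncat \<Rightarrow> ('o, 'm) opwreath \<Rightarrow> 'o \<Rightarrow> 'm \<Rightarrow> 'm" where
  "Gbar A W Y f = cmp A (zeta W Y) (GA W f)"

locale mixed_opwreath = monoidal_monad A T for A :: "('o, 'm) moncat" and T +
  fixes W :: "('o, 'm) opwreath"
  assumes G_functor: "endofunctor A (GO W) (GA W)"
    and zeta_hom: "\<And>X. X \<in> obj A \<Longrightarrow> zeta W X \<in> hom A (GO W (TO T X)) (TO T (GO W X))"
    and delta_hom: "\<And>X. X \<in> obj A \<Longrightarrow> delta W X \<in> hom A (GO W X) (TO T (GO W (GO W X)))"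
    and eps_hom: "\<And>X. X \<in> obj A \<Longrightarrow> eps W X \<in> hom A (GO W X) (TO T X)"
    and zeta_nat: "\<And>f X Y. f \<in> hom A X Y \<Longrightarrow>
                    cmp A (zeta W Y) (GA W (TA T f)) = cmp A (TA T (GA W f)) (zeta W X)"
    and delta_nat: "\<And>f X Y. f \<in> hom A X Y \<Longrightarrow>
                    cmp A (delta W Y) (GA W f) = cmp A (TA T (GA W (GA W f))) (delta W X)"
    and eps_nat: "\<And>f X Y. f \<in> hom A X Y \<Longrightarrow>
                    cmp A (eps W Y) (GA W f) = cmp A (TA T f) (eps W X)"
    and ax_zeta_mu: "\<And>X. X \<in> obj A \<Longrightarrow>
                    cmp A (zeta W X) (GA W (mu T X))
                    = cmp A (mu T (GO W X)) (cmp A (TA T (zeta W X)) (zeta W (TO T X)))"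
    and ax_zeta_eta: "\<And>X. X \<in> obj A \<Longrightarrow>
                    cmp A (zeta W X) (GA W (eta T X)) = eta T (GO W X)"
    and ax_eps_zeta: "\<And>X. X \<in> obj A \<Longrightarrow>
                    cmp A (mu T X) (eps W (TO T X))
                    = cmp A (mu T X) (cmp A (TA T (eps W X)) (zeta W X))"
    and ax_delta_zeta: "\<And>X. X \<in> obj A \<Longrightarrow>
                    cmp A (mu T (GO W (GO W X)))
                      (cmp A (TA T (zeta W (GO W X)))
                        (cmp A (TA T (GA W (zeta W X))) (delta W (TO T X))))
                    = cmp A (mu T (GO W (GO W X))) (cmp A (TA T (delta W X)) (zeta W X))"
    and ax_coassoc: "\<And>X. X \<in> obj A \<Longrightarrow>
                    cmp A (mu T (GO W (GO W (GO W X))))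
                      (cmp A (TA T (delta W (GO W X))) (delta W X))
                    = cmp A (mu T (GO W (GO W (GO W X))))
                      (cmp A (TA T (zeta W (GO W (GO W X))))
                        (cmp A (TA T (GA W (delta W X))) (delta W X)))"
    and ax_counit1: "\<And>X. X \<in> obj A \<Longrightarrow>
                    cmp A (mu T (GO W X)) (cmp A (TA T (eps W (GO W X))) (delta W X))
                    = eta T (GO W X)"
    and ax_counit2: "\<And>X. X \<in> obj A \<Longrightarrow>
                    cmp A (mu T (GO W X))
                      (cmp A (TA T (zeta W X)) (cmp A (TA T (GA W (eps W X))) (delta W X)))
                    = eta T (GO W X)"

text \<open>Opmonoidal: the lifted comonad on the monoidal Kleisli category is an opmonoidal comonad,
  with opmonoidal structure given by Kleisli arrows psi_{X,X'} : G(X (x) X') -> GX (x) GX'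
  and psi0 : GI -> I.\<close>

locale opmonoidal_mixed_opwreath = mixed_opwreath A T W
  for A :: "('o, 'm) moncat" and T W +
  assumes psi_hom: "\<And>X Y. X \<in> obj A \<Longrightarrow> Y \<in> obj A \<Longrightarrow>
                     psi W X Y \<in> hom A (GO W (tO A X Y)) (TO T (tO A (GO W X) (GO W Y)))"
    and psi0_hom: "psi0 W \<in> hom A (GO W (unt A)) (TO T (unt A))"
    and psi_nat: "\<And>f f' X Y X' Y'. f \<in> hom A X (TO T Y) \<Longrightarrow> f' \<in> hom A X' (TO T Y') \<Longrightarrow>
                     kl_comp A T (tO A (GO W Y) (GO W Y')) (psi W Y Y')
                        (Gbar A W (tO A Y Y') (kl_tens A T Y Y' f f'))
                     = kl_comp A T (tO A (GO W Y) (GO W Y'))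
                        (kl_tens A T (GO W Y) (GO W Y') (Gbar A W Y f) (Gbar A W Y' f'))
                        (psi W X X')"
    and psi_coassoc: "\<And>X Y Z. X \<in> obj A \<Longrightarrow> Y \<in> obj A \<Longrightarrow> Z \<in> obj A \<Longrightarrow>
                     kl_comp A T (tO A (GO W X) (tO A (GO W Y) (GO W Z)))
                       (kl_asc A T (GO W X) (GO W Y) (GO W Z))
                       (kl_comp A T (tO A (tO A (GO W X) (GO W Y)) (GO W Z))
                          (kl_tens A T (tO A (GO W X) (GO W Y)) (GO W Z)
                             (psi W X Y) (eta T (GO W Z)))
                          (psi W (tO A X Y) Z))
                     = kl_comp A T (tO A (GO W X) (tO A (GO W Y) (GO W Z)))
                       (kl_tens A T (GO W X) (tO A (GO W Y) (GO W Z))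
                          (eta T (GO W X)) (psi W Y Z))
                       (kl_comp A T (tO A (GO W X) (GO W (tO A Y Z)))
                          (psi W X (tO A Y Z))
                          (Gbar A W (tO A X (tO A Y Z)) (kl_asc A T X Y Z)))"
    and psi_lcounit: "\<And>X. X \<in> obj A \<Longrightarrow>
                     kl_comp A T (GO W X) (kl_lu A T (GO W X))
                       (kl_comp A T (tO A (unt A) (GO W X))
                          (kl_tens A T (unt A) (GO W X) (psi0 W) (eta T (GO W X)))
                          (psi W (unt A) X))
                     = Gbar A W X (kl_lu A T X)"
    and psi_rcounit: "\<And>X. X \<in> obj A \<Longrightarrow>
                     kl_comp A T (GO W X) (kl_ru A T (GO W X))
                       (kl_comp A T (tO A (GO W X) (unt A))
                          (kl_tens A T (GO W X) (unt A) (eta T (GO W X)) (psi0 W))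
                          (psi W X (unt A)))
                     = Gbar A W X (kl_ru A T X)"
    and delta_opmon: "\<And>X Y. X \<in> obj A \<Longrightarrow> Y \<in> obj A \<Longrightarrow>
                     kl_comp A T (tO A (GO W (GO W X)) (GO W (GO W Y)))
                       (kl_comp A T (tO A (GO W (GO W X)) (GO W (GO W Y)))
                          (psi W (GO W X) (GO W Y))
                          (Gbar A W (tO A (GO W X) (GO W Y)) (psi W X Y)))
                       (delta W (tO A X Y))
                     = kl_comp A T (tO A (GO W (GO W X)) (GO W (GO W Y)))
                       (kl_tens A T (GO W (GO W X)) (GO W (GO W Y)) (delta W X) (delta W Y))
                       (psi W X Y)"
    and delta_opmon0: "kl_comp A T (unt A)
                       (kl_comp A T (unt A) (psi0 W) (Gbar A W (unt A) (psi0 W)))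
                       (delta W (unt A))
                     = psi0 W"
    and eps_opmon: "\<And>X Y. X \<in> obj A \<Longrightarrow> Y \<in> obj A \<Longrightarrow>
                     kl_comp A T (tO A X Y) (kl_tens A T X Y (eps W X) (eps W Y)) (psi W X Y)
                     = eps W (tO A X Y)"
    and eps_opmon0: "eps W (unt A) = psi0 W"

section \<open>The category mkl(G, zeta, T)\<close>

definition mkl_comp :: "('o, 'm) moncat \<Rightarrow> ('o, 'm) monmonad \<Rightarrow> ('o, 'm) opwreath \<Rightarrow>
    'o \<Rightarrow> 'o \<Rightarrow> 'o \<Rightarrow> 'm \<Rightarrow> 'm \<Rightarrow> 'm" where
  "mkl_comp A T W X Y Z f g =
     cmp A (cmp A (mu T Z) (TA T (mu T Z)))
       (cmp A (TA T (TA T g))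
         (cmp A (TA T (zeta W Y))
           (cmp A (TA T (GA W f)) (delta W X))))"

definition mkl_hom :: "('o, 'm) moncat \<Rightarrow> ('o, 'm) monmonad \<Rightarrow> ('o, 'm) opwreath \<Rightarrow>
    'o \<Rightarrow> 'o \<Rightarrow> 'm set" where
  "mkl_hom A T W X Y = hom A (GO W X) (TO T Y)"

end

theory Submission
  imports Defs
begin

text \<open>The Kleisli tensor precomposed with \<open>\<psi>\<close> is a bifunctor on \<open>mkl(G,\<zeta>,T)\<close>: it
  satisfies the interchange law and preserves the identities \<open>\<epsilon>\<close>. Writing
  \<open>u\<close> for the image of the right unitor \<open>I \<otimes> I \<rightarrow> I\<close>, counitality of \<open>\<psi>\<close> gives
  \<open>x \<circ> u = u \<circ> (x \<otimes> 1)\<close> and, since \<open>\<lambda>\<^sub>I = \<rho>\<^sub>I\<close>, also \<open>x \<circ> u = u \<circ> (1 \<otimes> x)\<close> for every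
  endomorphism \<open>x\<close> of \<open>I\<close>. The Eckmann--Hilton argument then yields
  \<open>(y \<circ> x) \<circ> u = u \<circ> (x \<otimes> y) = (x \<circ> y) \<circ> u\<close>, and \<open>u\<close> has a right inverse, so it can be
  cancelled.\<close>

context monoidal_category begin

lemma hom_iff: "f \<in> hom A X Y \<longleftrightarrow> f \<in> arr A \<and> src A f = X \<and> tgt A f = Y"
  by (simp add: hom_def)

lemma arr_hom: "f \<in> arr A \<Longrightarrow> f \<in> hom A (src A f) (tgt A f)"
  by (simp add: hom_def)

lemma src_obj [simp]: "f \<in> arr A \<Longrightarrow> src A f \<in> obj A"
  and tgt_obj [simp]: "f \<in> arr A \<Longrightarrow> tgt A f \<in> obj A"
  using arr_obj by blast+

lemma cmp_arr [simp]: "f \<in> arr A \<Longrightarrow> g \<in> arr A \<Longrightarrow> tgt A f = src A g \<Longrightarrow> cmp A g f \<in> arr A"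
  and cmp_src [simp]: "f \<in> arr A \<Longrightarrow> g \<in> arr A \<Longrightarrow> tgt A f = src A g \<Longrightarrow> src A (cmp A g f) = src A f"
  and cmp_tgt [simp]: "f \<in> arr A \<Longrightarrow> g \<in> arr A \<Longrightarrow> tgt A f = src A g \<Longrightarrow> tgt A (cmp A g f) = tgt A g"
  using cmp_hom[of f g] by (simp_all add: hom_def)

lemma idt_arr [simp]: "X \<in> obj A \<Longrightarrow> idt A X \<in> arr A"
  and idt_src [simp]: "X \<in> obj A \<Longrightarrow> src A (idt A X) = X"
  and idt_tgt [simp]: "X \<in> obj A \<Longrightarrow> tgt A (idt A X) = X"
  using id_hom by (simp_all add: hom_def)

lemma tA_arr [simp]: "f \<in> arr A \<Longrightarrow> g \<in> arr A \<Longrightarrow> tA A f g \<in> arr A"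
  and tA_src [simp]: "f \<in> arr A \<Longrightarrow> g \<in> arr A \<Longrightarrow> src A (tA A f g) = tO A (src A f) (src A g)"
  and tA_tgt [simp]: "f \<in> arr A \<Longrightarrow> g \<in> arr A \<Longrightarrow> tgt A (tA A f g) = tO A (tgt A f) (tgt A g)"
  using tA_hom[OF arr_hom arr_hom] by (simp_all add: hom_def)

lemma asc_arr [simp]: "X \<in> obj A \<Longrightarrow> Y \<in> obj A \<Longrightarrow> Z \<in> obj A \<Longrightarrow> asc A X Y Z \<in> arr A"
  and asc_src [simp]: "X \<in> obj A \<Longrightarrow> Y \<in> obj A \<Longrightarrow> Z \<in> obj A \<Longrightarrow> src A (asc A X Y Z) = tO A (tO A X Y) Z"
  and asc_tgt [simp]: "X \<in> obj A \<Longrightarrow> Y \<in> obj A \<Longrightarrow> Z \<in> obj A \<Longrightarrow> tgt A (asc A X Y Z) = tO A X (tO A Y Z)"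
  using asc_hom[of X Y Z] by (auto simp add: hom_def)

lemma lu_arr [simp]: "X \<in> obj A \<Longrightarrow> lu A X \<in> arr A"
  and lu_src [simp]: "X \<in> obj A \<Longrightarrow> src A (lu A X) = tO A (unt A) X"
  and lu_tgt [simp]: "X \<in> obj A \<Longrightarrow> tgt A (lu A X) = X"
  using lu_hom[of X] by (auto simp add: hom_def)

lemma ru_arr [simp]: "X \<in> obj A \<Longrightarrow> ru A X \<in> arr A"
  and ru_src [simp]: "X \<in> obj A \<Longrightarrow> src A (ru A X) = tO A X (unt A)"
  and ru_tgt [simp]: "X \<in> obj A \<Longrightarrow> tgt A (ru A X) = X"
  using ru_hom[of X] by (auto simp add: hom_def)

declare tO_obj [simp] unt_obj [simp]

lemma cmp_assoc_right [simp]: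
  "f \<in> arr A \<Longrightarrow> g \<in> arr A \<Longrightarrow> h \<in> arr A \<Longrightarrow> tgt A f = src A g \<Longrightarrow> tgt A g = src A h \<Longrightarrow>
   cmp A (cmp A h g) f = cmp A h (cmp A g f)"
  using cmp_assoc by simp

lemma cmp_idt_left [simp]: "f \<in> arr A \<Longrightarrow> tgt A f = Y \<Longrightarrow> cmp A (idt A Y) f = f"
  and cmp_idt_right [simp]: "f \<in> arr A \<Longrightarrow> src A f = X \<Longrightarrow> cmp A f (idt A X) = f"
  using id_left id_right by blast+

lemma cmp_reduce:
  "cmp A p q = r \<Longrightarrow> p \<in> arr A \<Longrightarrow> q \<in> arr A \<Longrightarrow> k \<in> arr A \<Longrightarrow>
   tgt A q = src A p \<Longrightarrow> tgt A k = src A q \<Longrightarrow> cmp A p (cmp A q k) = cmp A r k"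
  by (metis cmp_assoc_right)

lemma cmp_permute:
  "cmp A p q = cmp A r s \<Longrightarrow> p \<in> arr A \<Longrightarrow> q \<in> arr A \<Longrightarrow> r \<in> arr A \<Longrightarrow> s \<in> arr A \<Longrightarrow>
   k \<in> arr A \<Longrightarrow> tgt A q = src A p \<Longrightarrow> tgt A s = src A r \<Longrightarrow> tgt A k = src A q \<Longrightarrow>
   tgt A k = src A s \<Longrightarrow> cmp A p (cmp A q k) = cmp A r (cmp A s k)"
  by (metis cmp_assoc_right)

lemma is_isoE:
  assumes "is_iso A h"
  obtains g where "h \<in> arr A" "g \<in> arr A" "src A g = tgt A h" "tgt A g = src A h"
    "cmp A g h = idt A (src A h)" "cmp A h g = idt A (tgt A h)"
  using assms unfolding is_iso_def hom_def by blast

lemma iso_cancel_right: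
  assumes "is_iso A h" "x \<in> arr A" "y \<in> arr A" "src A x = tgt A h" "src A y = tgt A h"
    and "cmp A x h = cmp A y h"
  shows "x = y"
proof -
  obtain g where g: "h \<in> arr A" "g \<in> arr A" "src A g = tgt A h" "tgt A g = src A h"
    "cmp A g h = idt A (src A h)" "cmp A h g = idt A (tgt A h)"
    using is_isoE[OF assms(1)] by blast
  have "x = cmp A x (cmp A h g)" using g assms by simp
  also have "\<dots> = cmp A (cmp A x h) g" using g(1-4) assms(1-5) by simp
  also have "\<dots> = cmp A (cmp A y h) g" using assms(6) by simp
  also have "\<dots> = cmp A y (cmp A h g)" using g(1-4) assms(1-5) by simp
  also have "\<dots> = y" using g assms by simp
  finally show ?thesis .
qed

lemma iso_cancel_left:
  assumes "is_iso A h" "x \<in> arr A" "y \<in> arr A" "tgt A x = src A h" "tgt A y = src A h"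
    and "cmp A h x = cmp A h y"
  shows "x = y"
proof -
  obtain g where g: "h \<in> arr A" "g \<in> arr A" "src A g = tgt A h" "tgt A g = src A h"
    "cmp A g h = idt A (src A h)" "cmp A h g = idt A (tgt A h)"
    using is_isoE[OF assms(1)] by blast
  have "x = cmp A (cmp A g h) x" using g assms by simp
  also have "\<dots> = cmp A g (cmp A h x)" using g(1-4) assms(1-5) by simp
  also have "\<dots> = cmp A g (cmp A h y)" using assms(6) by simp
  also have "\<dots> = cmp A (cmp A g h) y" using g(1-4) assms(1-5) by simp
  also have "\<dots> = y" using g assms by simp
  finally show ?thesis .
qed

lemma is_iso_tA_idt:
  assumes "is_iso A h" "Y \<in> obj A"
  shows "is_iso A (tA A h (idt A Y))"
proof -
  obtain g where g: "h \<in> arr A" "g \<in> arr A" "src A g = tgt A h" "tgt A g = src A h"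
    "cmp A g h = idt A (src A h)" "cmp A h g = idt A (tgt A h)"
    using is_isoE[OF assms(1)] by blast
  have "cmp A (tA A g (idt A Y)) (tA A h (idt A Y)) = idt A (tO A (src A h) Y)"
    and "cmp A (tA A h (idt A Y)) (tA A g (idt A Y)) = idt A (tO A (tgt A h) Y)"
    using tA_cmp[of h g "idt A Y" "idt A Y"] tA_cmp[of g h "idt A Y" "idt A Y"] g assms tA_id
    by simp_all
  then show ?thesis
    unfolding is_iso_def hom_def using g assms
    by (intro conjI bexI[of _ "tA A g (idt A Y)"]) auto
qed

lemma unit_tensor_faithful:
  assumes "h \<in> arr A" "k \<in> arr A" "src A h = src A k" "tgt A h = tgt A k"
    and "tA A (idt A (unt A)) h = tA A (idt A (unt A)) k"
  shows "h = k"
proof -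
  have "cmp A h (lu A (src A h)) = cmp A (lu A (tgt A h)) (tA A (idt A (unt A)) h)"
    using lu_nat[of h "src A h" "tgt A h"] assms by (simp add: hom_iff)
  also have "\<dots> = cmp A k (lu A (src A h))"
    using lu_nat[of k "src A h" "tgt A h"] assms by (simp add: hom_iff)
  finally show ?thesis using iso_cancel_right[OF lu_iso[of "src A h"]] assms by simp
qed

lemma lu_unit_tensor:
  assumes "X \<in> obj A"
  shows "lu A (tO A (unt A) X) = tA A (idt A (unt A)) (lu A X)"
proof -
  have "cmp A (lu A X) (tA A (idt A (unt A)) (lu A X)) = cmp A (lu A X) (lu A (tO A (unt A) X))"
    using lu_nat[of "lu A X" "tO A (unt A) X" X] assms by (simp add: hom_iff)
  then show ?thesis using iso_cancel_left[OF lu_iso[OF assms]] assms by simp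
qed

text \<open>Kelly's coherence lemma: conjugating by the pentagon and both instances of the triangle
  identity reduces it to the equality after tensoring with \<open>I\<close> on the left, which is faithful.\<close>

lemma lu_tensor_asc:
  assumes X: "X \<in> obj A" and Y: "Y \<in> obj A"
  shows "cmp A (lu A (tO A X Y)) (asc A (unt A) X Y) = tA A (lu A X) (idt A Y)"
proof -
  let ?I = "unt A"
  have I: "?I \<in> obj A" by simp
  define P where "P = asc A ?I (tO A ?I X) Y"
  define Q where "Q = tA A (asc A ?I ?I X) (idt A Y)"
  define L where "L = cmp A (lu A (tO A X Y)) (asc A ?I X Y)"
  define R where "R = tA A (lu A X) (idt A Y)"
  have "tA A (idt A ?I) L = cmp A (tA A (idt A ?I) (lu A (tO A X Y))) (tA A (idt A ?I) (asc A ?I X Y))"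
    unfolding L_def using tA_cmp[of "idt A ?I" "idt A ?I" "asc A ?I X Y" "lu A (tO A X Y)"] X Y by simp
  then have "cmp A (tA A (idt A ?I) L) (cmp A P Q) =
      cmp A (tA A (idt A ?I) (lu A (tO A X Y))) (cmp A (tA A (idt A ?I) (asc A ?I X Y)) (cmp A P Q))"
    unfolding P_def Q_def using X Y by simp
  also have "\<dots> = cmp A (tA A (idt A ?I) (lu A (tO A X Y)))
      (cmp A (asc A ?I ?I (tO A X Y)) (asc A (tO A ?I ?I) X Y))"
    unfolding P_def Q_def using pentagon[OF I I X Y] by simp
  also have "\<dots> = cmp A (cmp A (tA A (idt A ?I) (lu A (tO A X Y))) (asc A ?I ?I (tO A X Y)))
      (asc A (tO A ?I ?I) X Y)"
    using X Y by simp
  also have "\<dots> = cmp A (tA A (ru A ?I) (tA A (idt A X) (idt A Y))) (asc A (tO A ?I ?I) X Y)"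
    using triangle[of ?I "tO A X Y"] tA_id[OF X Y] X Y by simp
  also have "\<dots> = cmp A (asc A ?I X Y) (tA A (tA A (ru A ?I) (idt A X)) (idt A Y))"
    using asc_nat[of "ru A ?I" "tO A ?I ?I" ?I "idt A X" X X "idt A Y" Y Y] X Y
    by (simp add: hom_iff)
  also have "\<dots> = cmp A (asc A ?I X Y)
      (tA A (cmp A (tA A (idt A ?I) (lu A X)) (asc A ?I ?I X)) (cmp A (idt A Y) (idt A Y)))"
    using triangle[of ?I X] X Y by simp
  also have "\<dots> = cmp A (cmp A (asc A ?I X Y) (tA A (tA A (idt A ?I) (lu A X)) (idt A Y))) Q"
    unfolding Q_def using tA_cmp[of "asc A ?I ?I X" "tA A (idt A ?I) (lu A X)" "idt A Y" "idt A Y"] X Y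
    by simp
  also have "\<dots> = cmp A (cmp A (tA A (idt A ?I) R) P) Q"
    unfolding R_def P_def
    using asc_nat[of "idt A ?I" ?I ?I "lu A X" "tO A ?I X" X "idt A Y" Y Y] X Y by (simp add: hom_iff)
  finally have "cmp A (cmp A (tA A (idt A ?I) L) P) Q = cmp A (cmp A (tA A (idt A ?I) R) P) Q"
    unfolding P_def Q_def L_def R_def using X Y by simp
  then have "cmp A (tA A (idt A ?I) L) P = cmp A (tA A (idt A ?I) R) P"
    by (rule iso_cancel_right[rotated 5])
      (use X Y is_iso_tA_idt[OF asc_iso[OF I I X] Y] in \<open>simp_all add: Q_def P_def L_def R_def\<close>)
  then have "tA A (idt A ?I) L = tA A (idt A ?I) R"
    by (rule iso_cancel_right[rotated 5])
      (use X Y asc_iso[OF I _ Y, of "tO A ?I X"] in \<open>simp_all add: P_def L_def R_def\<close>)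
  then show ?thesis
    using unit_tensor_faithful X Y unfolding L_def R_def by simp
qed

lemma lu_unit_eq_ru_unit: "lu A (unt A) = ru A (unt A)"
proof -
  let ?I = "unt A"
  have I: "?I \<in> obj A" by simp
  have "tA A (lu A ?I) (idt A ?I) = tA A (ru A ?I) (idt A ?I)"
    using lu_tensor_asc[OF I I] triangle[OF I I] lu_unit_tensor[OF I] by simp
  moreover have "cmp A (ru A ?I) (tA A (lu A ?I) (idt A ?I)) = cmp A (lu A ?I) (ru A (tO A ?I ?I))"
    and "cmp A (ru A ?I) (tA A (ru A ?I) (idt A ?I)) = cmp A (ru A ?I) (ru A (tO A ?I ?I))"
    using ru_nat[of "lu A ?I" "tO A ?I ?I" ?I] ru_nat[of "ru A ?I" "tO A ?I ?I" ?I]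
    by (simp_all add: hom_iff)
  ultimately show ?thesis
    using iso_cancel_right[OF ru_iso[of "tO A ?I ?I"]] by simp
qed

end

context monoidal_monad begin

lemma TO_obj [simp]: "X \<in> obj A \<Longrightarrow> TO T X \<in> obj A"
  using T_functor unfolding endofunctor_def by blast

lemma TA_arr [simp]: "f \<in> arr A \<Longrightarrow> TA T f \<in> arr A"
  and TA_src [simp]: "f \<in> arr A \<Longrightarrow> src A (TA T f) = TO T (src A f)"
  and TA_tgt [simp]: "f \<in> arr A \<Longrightarrow> tgt A (TA T f) = TO T (tgt A f)"
  using T_functor arr_hom[of f] unfolding endofunctor_def hom_iff by blast+

lemma TA_cmp [simp]:
  "f \<in> arr A \<Longrightarrow> g \<in> arr A \<Longrightarrow> tgt A f = src A g \<Longrightarrow> TA T (cmp A g f) = cmp A (TA T g) (TA T f)"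
  and TA_idt [simp]: "X \<in> obj A \<Longrightarrow> TA T (idt A X) = idt A (TO T X)"
  using T_functor unfolding endofunctor_def by blast+

lemma mu_arr [simp]: "X \<in> obj A \<Longrightarrow> mu T X \<in> arr A"
  and mu_src [simp]: "X \<in> obj A \<Longrightarrow> src A (mu T X) = TO T (TO T X)"
  and mu_tgt [simp]: "X \<in> obj A \<Longrightarrow> tgt A (mu T X) = TO T X"
  using mu_hom[of X] by (auto simp: hom_iff)

lemma eta_arr [simp]: "X \<in> obj A \<Longrightarrow> eta T X \<in> arr A"
  and eta_src [simp]: "X \<in> obj A \<Longrightarrow> src A (eta T X) = X"
  and eta_tgt [simp]: "X \<in> obj A \<Longrightarrow> tgt A (eta T X) = TO T X"
  using eta_hom[of X] by (auto simp: hom_iff)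

lemma phi_arr [simp]: "X \<in> obj A \<Longrightarrow> Y \<in> obj A \<Longrightarrow> phi T X Y \<in> arr A"
  and phi_src [simp]: "X \<in> obj A \<Longrightarrow> Y \<in> obj A \<Longrightarrow> src A (phi T X Y) = tO A (TO T X) (TO T Y)"
  and phi_tgt [simp]: "X \<in> obj A \<Longrightarrow> Y \<in> obj A \<Longrightarrow> tgt A (phi T X Y) = TO T (tO A X Y)"
  using phi_hom[of X Y] by (auto simp: hom_iff)

lemma phi0_arr [simp]: "phi0 T \<in> arr A"
  and phi0_src [simp]: "src A (phi0 T) = unt A"
  and phi0_tgt [simp]: "tgt A (phi0 T) = TO T (unt A)"
  using phi0_hom by (auto simp: hom_iff)

abbreviation kcomp :: "'o \<Rightarrow> 'm \<Rightarrow> 'm \<Rightarrow> 'm" where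
  "kcomp \<equiv> kl_comp A T"

abbreviation ktens :: "'o \<Rightarrow> 'o \<Rightarrow> 'm \<Rightarrow> 'm \<Rightarrow> 'm" where
  "ktens \<equiv> kl_tens A T"

lemma kcomp_arr [simp]:
  "f \<in> arr A \<Longrightarrow> g \<in> arr A \<Longrightarrow> Z \<in> obj A \<Longrightarrow> tgt A f = TO T (src A g) \<Longrightarrow> tgt A g = TO T Z \<Longrightarrow>
   kcomp Z g f \<in> arr A"
  and kcomp_src [simp]:
  "f \<in> arr A \<Longrightarrow> g \<in> arr A \<Longrightarrow> Z \<in> obj A \<Longrightarrow> tgt A f = TO T (src A g) \<Longrightarrow> tgt A g = TO T Z \<Longrightarrow>
   src A (kcomp Z g f) = src A f"
  and kcomp_tgt [simp]:
  "f \<in> arr A \<Longrightarrow> g \<in> arr A \<Longrightarrow> Z \<in> obj A \<Longrightarrow> tgt A f = TO T (src A g) \<Longrightarrow> tgt A g = TO T Z \<Longrightarrow>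
   tgt A (kcomp Z g f) = TO T Z"
  unfolding kl_comp_def by simp_all

lemma ktens_arr [simp]:
  "f \<in> arr A \<Longrightarrow> g \<in> arr A \<Longrightarrow> Y \<in> obj A \<Longrightarrow> Y' \<in> obj A \<Longrightarrow> tgt A f = TO T Y \<Longrightarrow> tgt A g = TO T Y' \<Longrightarrow>
   ktens Y Y' f g \<in> arr A"
  and ktens_src [simp]:
  "f \<in> arr A \<Longrightarrow> g \<in> arr A \<Longrightarrow> Y \<in> obj A \<Longrightarrow> Y' \<in> obj A \<Longrightarrow> tgt A f = TO T Y \<Longrightarrow> tgt A g = TO T Y' \<Longrightarrow>
   src A (ktens Y Y' f g) = tO A (src A f) (src A g)"
  and ktens_tgt [simp]:
  "f \<in> arr A \<Longrightarrow> g \<in> arr A \<Longrightarrow> Y \<in> obj A \<Longrightarrow> Y' \<in> obj A \<Longrightarrow> tgt A f = TO T Y \<Longrightarrow> tgt A g = TO T Y' \<Longrightarrow>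
   tgt A (ktens Y Y' f g) = TO T (tO A Y Y')"
  unfolding kl_tens_def by simp_all

lemma kl_ru_arr [simp]: "X \<in> obj A \<Longrightarrow> kl_ru A T X \<in> arr A"
  and kl_ru_src [simp]: "X \<in> obj A \<Longrightarrow> src A (kl_ru A T X) = tO A X (unt A)"
  and kl_ru_tgt [simp]: "X \<in> obj A \<Longrightarrow> tgt A (kl_ru A T X) = TO T X"
  unfolding kl_ru_def by simp_all

lemma kl_lu_arr [simp]: "X \<in> obj A \<Longrightarrow> kl_lu A T X \<in> arr A"
  and kl_lu_src [simp]: "X \<in> obj A \<Longrightarrow> src A (kl_lu A T X) = tO A (unt A) X"
  and kl_lu_tgt [simp]: "X \<in> obj A \<Longrightarrow> tgt A (kl_lu A T X) = TO T X"
  unfolding kl_lu_def by simp_all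

lemma kcomp_assoc:
  assumes "f \<in> arr A" "g \<in> arr A" "h \<in> arr A" "Z \<in> obj A" "V \<in> obj A"
    and "tgt A f = TO T (src A g)" "tgt A g = TO T Z" "src A h = Z" "tgt A h = TO T V"
  shows "kcomp V h (kcomp Z g f) = kcomp V (kcomp V h g) f"
proof -
  have "cmp A (TA T h) (cmp A (mu T Z) (cmp A (TA T g) f))
      = cmp A (mu T (TO T V)) (cmp A (TA T (TA T h)) (cmp A (TA T g) f))"
    using cmp_permute[OF mu_nat[of h Z "TO T V"], of "cmp A (TA T g) f"] assms by (simp add: hom_iff)
  moreover have "cmp A (mu T V) (cmp A (mu T (TO T V)) k) = cmp A (mu T V) (cmp A (TA T (mu T V)) k)"
    if "k \<in> arr A" "tgt A k = TO T (TO T (TO T V))" for k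
    using cmp_permute[OF mu_assoc[of V], of k] that assms by simp
  ultimately show ?thesis unfolding kl_comp_def using assms by simp
qed

lemma kcomp_eta_left:
  assumes "f \<in> arr A" "Y \<in> obj A" "tgt A f = TO T Y"
  shows "kcomp Y (eta T Y) f = f"
  unfolding kl_comp_def using cmp_reduce[OF mu_eta_right[of Y], of f] assms by simp

lemma kcomp_eta_right:
  assumes "g \<in> arr A" "X \<in> obj A" "Z \<in> obj A" "src A g = X" "tgt A g = TO T Z"
  shows "kcomp Z g (eta T X) = g"
proof -
  have "cmp A (TA T g) (eta T X) = cmp A (eta T (TO T Z)) g"
    using eta_nat[of g X "TO T Z"] assms by (simp add: hom_iff)
  then show ?thesis
    unfolding kl_comp_def using cmp_reduce[OF mu_eta_left[of Z], of g] assms by simp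
qed

lemma ktens_interchange:
  assumes "f \<in> arr A" "f' \<in> arr A" "g \<in> arr A" "g' \<in> arr A"
    and "Y \<in> obj A" "Y' \<in> obj A" "Z \<in> obj A" "Z' \<in> obj A"
    and "tgt A f = TO T Y" "tgt A f' = TO T Y'" "src A g = Y" "src A g' = Y'"
    and "tgt A g = TO T Z" "tgt A g' = TO T Z'"
  shows "kcomp (tO A Z Z') (ktens Z Z' g g') (ktens Y Y' f f') = ktens Z Z' (kcomp Z g f) (kcomp Z' g' f')"
proof -
  have "cmp A (TA T (tA A g g')) (cmp A (phi T Y Y') k)
      = cmp A (phi T (TO T Z) (TO T Z')) (cmp A (tA A (TA T g) (TA T g')) k)"
    if "k \<in> arr A" "tgt A k = tO A (TO T Y) (TO T Y')" for k
    using cmp_permute[OF phi_nat[of g Y "TO T Z" g' Y' "TO T Z'"], of k, symmetric] that assms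
    by (simp add: hom_iff)
  moreover have "cmp A (mu T (tO A Z Z')) (cmp A (TA T (phi T Z Z')) (cmp A (phi T (TO T Z) (TO T Z')) k))
      = cmp A (phi T Z Z') (cmp A (tA A (mu T Z) (mu T Z')) k)"
    if "k \<in> arr A" "tgt A k = tO A (TO T (TO T Z)) (TO T (TO T Z'))" for k
    using arg_cong[OF mu_monoidal[of Z Z'], of "\<lambda>x. cmp A x k"] that assms by simp
  ultimately show ?thesis
    unfolding kl_comp_def kl_tens_def using assms by (simp add: tA_cmp)
qed

text \<open>Both sides of the two unitor naturality squares below reduce to \<open>f \<circ> \<rho>\<^sub>X\<close>
  (resp. \<open>f \<circ> \<lambda>\<^sub>X\<close>), using unitality of \<open>\<phi>\<close> and \<open>\<eta>\<^sub>I = \<phi>\<^sub>0\<close>.\<close>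

lemma kl_ru_natural:
  assumes "f \<in> arr A" "X \<in> obj A" "Y \<in> obj A" "src A f = X" "tgt A f = TO T Y"
  shows "kcomp Y (kl_ru A T Y) (ktens Y (unt A) f (eta T (unt A))) = kcomp Y f (kl_ru A T X)"
proof -
  let ?u = "tA A (idt A (TO T Y)) (phi0 T)"
  have "tA A f (eta T (unt A)) = cmp A ?u (tA A f (idt A (unt A)))"
    using tA_cmp[of f "idt A (TO T Y)" "idt A (unt A)" "phi0 T"] assms eta_monoidal0 by simp
  moreover have "cmp A (TA T (ru A Y)) (cmp A (phi T Y (unt A)) (cmp A ?u k)) = cmp A (ru A (TO T Y)) k"
    if "k \<in> arr A" "tgt A k = tO A (TO T Y) (unt A)" for k
    using arg_cong[OF phi_runit[of Y], of "\<lambda>x. cmp A x k"] that assms by simp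
  moreover have "cmp A (ru A (TO T Y)) (tA A f (idt A (unt A))) = cmp A f (ru A X)"
    using ru_nat[of f X "TO T Y"] assms by (simp add: hom_iff)
  ultimately have "kcomp Y (kl_ru A T Y) (ktens Y (unt A) f (eta T (unt A))) = cmp A f (ru A X)"
    unfolding kl_comp_def kl_tens_def kl_ru_def
    using cmp_reduce[OF mu_eta_right[of Y], of "cmp A (TA T (ru A Y)) (cmp A (phi T Y (unt A))
      (cmp A ?u (tA A f (idt A (unt A)))))"] assms
    by simp
  moreover have "cmp A (TA T f) (cmp A (eta T X) (ru A X)) = cmp A (eta T (TO T Y)) (cmp A f (ru A X))"
    using cmp_permute[OF eta_nat[of f X "TO T Y"], of "ru A X", symmetric] assms by (simp add: hom_iff)
  then have "kcomp Y f (kl_ru A T X) = cmp A f (ru A X)"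
    unfolding kl_comp_def kl_ru_def using cmp_reduce[OF mu_eta_left[of Y], of "cmp A f (ru A X)"] assms
    by simp
  ultimately show ?thesis by simp
qed

lemma kl_lu_natural:
  assumes "f \<in> arr A" "X \<in> obj A" "Y \<in> obj A" "src A f = X" "tgt A f = TO T Y"
  shows "kcomp Y (kl_lu A T Y) (ktens (unt A) Y (eta T (unt A)) f) = kcomp Y f (kl_lu A T X)"
proof -
  let ?u = "tA A (phi0 T) (idt A (TO T Y))"
  have "tA A (eta T (unt A)) f = cmp A ?u (tA A (idt A (unt A)) f)"
    using tA_cmp[of "idt A (unt A)" "phi0 T" f "idt A (TO T Y)"] assms eta_monoidal0 by simp
  moreover have "cmp A (TA T (lu A Y)) (cmp A (phi T (unt A) Y) (cmp A ?u k)) = cmp A (lu A (TO T Y)) k"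
    if "k \<in> arr A" "tgt A k = tO A (unt A) (TO T Y)" for k
    using arg_cong[OF phi_lunit[of Y], of "\<lambda>x. cmp A x k"] that assms by simp
  moreover have "cmp A (lu A (TO T Y)) (tA A (idt A (unt A)) f) = cmp A f (lu A X)"
    using lu_nat[of f X "TO T Y"] assms by (simp add: hom_iff)
  ultimately have "kcomp Y (kl_lu A T Y) (ktens (unt A) Y (eta T (unt A)) f) = cmp A f (lu A X)"
    unfolding kl_comp_def kl_tens_def kl_lu_def
    using cmp_reduce[OF mu_eta_right[of Y], of "cmp A (TA T (lu A Y)) (cmp A (phi T (unt A) Y)
      (cmp A ?u (tA A (idt A (unt A)) f)))"] assms
    by simp
  moreover have "cmp A (TA T f) (cmp A (eta T X) (lu A X)) = cmp A (eta T (TO T Y)) (cmp A f (lu A X))"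
    using cmp_permute[OF eta_nat[of f X "TO T Y"], of "lu A X", symmetric] assms by (simp add: hom_iff)
  then have "kcomp Y f (kl_lu A T X) = cmp A f (lu A X)"
    unfolding kl_comp_def kl_lu_def using cmp_reduce[OF mu_eta_left[of Y], of "cmp A f (lu A X)"] assms
    by simp
  ultimately show ?thesis by simp
qed

lemma kl_ru_section:
  assumes "X \<in> obj A" "g \<in> arr A" "src A g = X" "tgt A g = tO A X (unt A)"
    and "cmp A (ru A X) g = idt A X"
  shows "kcomp X (kl_ru A T X) (cmp A (eta T (tO A X (unt A))) g) = eta T X"
proof -
  have "cmp A (TA T (ru A X)) (cmp A (eta T (tO A X (unt A))) g) = eta T X"
    using arg_cong[OF eta_nat[of "ru A X" "tO A X (unt A)" X], of "\<lambda>x. cmp A x g", symmetric] assms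
    by (simp add: hom_iff)
  then show ?thesis
    unfolding kl_comp_def kl_ru_def using assms
      cmp_reduce[OF mu_eta_right[of X], of "cmp A (TA T (ru A X)) (cmp A (eta T (tO A X (unt A))) g)"]
    by simp
qed

lemma kcomp_reduce:
  assumes "kcomp Z p q = e"
    and "p \<in> arr A" "q \<in> arr A" "k \<in> arr A" "Z \<in> obj A" "V \<in> obj A"
    and "tgt A q = TO T (src A p)" "tgt A p = TO T Z" "src A k = Z" "tgt A k = TO T V"
  shows "kcomp V (kcomp V k p) q = kcomp V k e"
  using kcomp_assoc[of q p k Z V] assms by simp

lemma kcomp_permute:
  assumes "kcomp Z p q = kcomp Z r s"
    and "p \<in> arr A" "q \<in> arr A" "r \<in> arr A" "s \<in> arr A" "k \<in> arr A" "Z \<in> obj A" "V \<in> obj A"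
    and "tgt A q = TO T (src A p)" "tgt A p = TO T Z" "tgt A s = TO T (src A r)" "tgt A r = TO T Z"
    and "src A k = Z" "tgt A k = TO T V"
  shows "kcomp V (kcomp V k p) q = kcomp V (kcomp V k r) s"
  using kcomp_assoc[of q p k Z V] kcomp_assoc[of s r k Z V] assms by simp

end

context mixed_opwreath begin

lemma GO_obj [simp]: "X \<in> obj A \<Longrightarrow> GO W X \<in> obj A"
  using G_functor unfolding endofunctor_def by blast

lemma GA_arr [simp]: "f \<in> arr A \<Longrightarrow> GA W f \<in> arr A"
  and GA_src [simp]: "f \<in> arr A \<Longrightarrow> src A (GA W f) = GO W (src A f)"
  and GA_tgt [simp]: "f \<in> arr A \<Longrightarrow> tgt A (GA W f) = GO W (tgt A f)"
  using G_functor arr_hom[of f] unfolding endofunctor_def hom_iff by blast+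

lemma GA_cmp [simp]:
  "f \<in> arr A \<Longrightarrow> g \<in> arr A \<Longrightarrow> tgt A f = src A g \<Longrightarrow> GA W (cmp A g f) = cmp A (GA W g) (GA W f)"
  and GA_idt [simp]: "X \<in> obj A \<Longrightarrow> GA W (idt A X) = idt A (GO W X)"
  using G_functor unfolding endofunctor_def by blast+

lemma zeta_arr [simp]: "X \<in> obj A \<Longrightarrow> zeta W X \<in> arr A"
  and zeta_src [simp]: "X \<in> obj A \<Longrightarrow> src A (zeta W X) = GO W (TO T X)"
  and zeta_tgt [simp]: "X \<in> obj A \<Longrightarrow> tgt A (zeta W X) = TO T (GO W X)"
  using zeta_hom[of X] by (auto simp: hom_iff)

lemma delta_arr [simp]: "X \<in> obj A \<Longrightarrow> delta W X \<in> arr A"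
  and delta_src [simp]: "X \<in> obj A \<Longrightarrow> src A (delta W X) = GO W X"
  and delta_tgt [simp]: "X \<in> obj A \<Longrightarrow> tgt A (delta W X) = TO T (GO W (GO W X))"
  using delta_hom[of X] by (auto simp: hom_iff)

lemma eps_arr [simp]: "X \<in> obj A \<Longrightarrow> eps W X \<in> arr A"
  and eps_src [simp]: "X \<in> obj A \<Longrightarrow> src A (eps W X) = GO W X"
  and eps_tgt [simp]: "X \<in> obj A \<Longrightarrow> tgt A (eps W X) = TO T X"
  using eps_hom[of X] by (auto simp: hom_iff)

abbreviation Glift :: "'o \<Rightarrow> 'm \<Rightarrow> 'm" where
  "Glift \<equiv> Gbar A W"

lemma Glift_arr [simp]: "f \<in> arr A \<Longrightarrow> Y \<in> obj A \<Longrightarrow> tgt A f = TO T Y \<Longrightarrow> Glift Y f \<in> arr A"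
  and Glift_src [simp]: "f \<in> arr A \<Longrightarrow> Y \<in> obj A \<Longrightarrow> tgt A f = TO T Y \<Longrightarrow> src A (Glift Y f) = GO W (src A f)"
  and Glift_tgt [simp]: "f \<in> arr A \<Longrightarrow> Y \<in> obj A \<Longrightarrow> tgt A f = TO T Y \<Longrightarrow> tgt A (Glift Y f) = TO T (GO W Y)"
  unfolding Gbar_def by simp_all

lemma Glift_kcomp:
  assumes "f \<in> arr A" "g \<in> arr A" "Z \<in> obj A" "tgt A f = TO T (src A g)" "tgt A g = TO T Z"
  shows "Glift Z (kcomp Z g f) = kcomp (GO W Z) (Glift Z g) (Glift (src A g) f)"
proof -
  have "cmp A (zeta W Z) (cmp A (GA W (mu T Z)) k)
      = cmp A (mu T (GO W Z)) (cmp A (TA T (zeta W Z)) (cmp A (zeta W (TO T Z)) k))"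
    if "k \<in> arr A" "tgt A k = GO W (TO T (TO T Z))" for k
    using arg_cong[OF ax_zeta_mu[of Z], of "\<lambda>x. cmp A x k"] that assms by simp
  moreover have "cmp A (zeta W (TO T Z)) (cmp A (GA W (TA T g)) k)
      = cmp A (TA T (GA W g)) (cmp A (zeta W (src A g)) k)"
    if "k \<in> arr A" "tgt A k = GO W (TO T (src A g))" for k
    using cmp_permute[OF zeta_nat[of g "src A g" "TO T Z"], of k] that assms by (simp add: hom_iff)
  ultimately show ?thesis unfolding kl_comp_def Gbar_def using assms by simp
qed

lemma Glift_eta: "X \<in> obj A \<Longrightarrow> Glift X (eta T X) = eta T (GO W X)"
  unfolding Gbar_def using ax_zeta_eta by simp

lemma eps_natural:
  assumes "f \<in> arr A" "Y \<in> obj A" "tgt A f = TO T Y"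
  shows "kcomp Y (eps W Y) (Glift Y f) = kcomp Y f (eps W (src A f))"
proof -
  have "cmp A (mu T Y) (cmp A (TA T (eps W Y)) (cmp A (zeta W Y) (GA W f)))
      = cmp A (mu T Y) (cmp A (eps W (TO T Y)) (GA W f))"
    using arg_cong[OF ax_eps_zeta[of Y], of "\<lambda>x. cmp A x (GA W f)"] assms by simp
  moreover have "cmp A (eps W (TO T Y)) (GA W f) = cmp A (TA T f) (eps W (src A f))"
    using eps_nat[of f "src A f" "TO T Y"] assms by (simp add: hom_iff)
  ultimately show ?thesis unfolding kl_comp_def Gbar_def using assms by simp
qed

lemma delta_natural:
  assumes "f \<in> arr A" "Y \<in> obj A" "tgt A f = TO T Y"
  shows "kcomp (GO W (GO W Y)) (delta W Y) (Glift Y f)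
    = kcomp (GO W (GO W Y)) (Glift (GO W Y) (Glift Y f)) (delta W (src A f))"
proof -
  have "cmp A (mu T (GO W (GO W Y))) (cmp A (TA T (delta W Y)) (cmp A (zeta W Y) (GA W f)))
      = cmp A (mu T (GO W (GO W Y))) (cmp A (TA T (zeta W (GO W Y)))
          (cmp A (TA T (GA W (zeta W Y))) (cmp A (delta W (TO T Y)) (GA W f))))"
    using arg_cong[OF ax_delta_zeta[of Y], of "\<lambda>x. cmp A x (GA W f)", symmetric] assms by simp
  moreover have "cmp A (delta W (TO T Y)) (GA W f) = cmp A (TA T (GA W (GA W f))) (delta W (src A f))"
    using delta_nat[of f "src A f" "TO T Y"] assms by (simp add: hom_iff)
  ultimately show ?thesis unfolding kl_comp_def Gbar_def using assms by simp
qed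

lemma delta_counit_left: "X \<in> obj A \<Longrightarrow> kcomp (GO W X) (eps W (GO W X)) (delta W X) = eta T (GO W X)"
  unfolding kl_comp_def using ax_counit1 by simp

lemma delta_counit_right: "X \<in> obj A \<Longrightarrow> kcomp (GO W X) (Glift X (eps W X)) (delta W X) = eta T (GO W X)"
  unfolding kl_comp_def Gbar_def using ax_counit2 by simp

lemma delta_coassoc:
  "X \<in> obj A \<Longrightarrow> kcomp (GO W (GO W (GO W X))) (delta W (GO W X)) (delta W X)
    = kcomp (GO W (GO W (GO W X))) (Glift (GO W (GO W X)) (delta W X)) (delta W X)"
  unfolding kl_comp_def Gbar_def using ax_coassoc by simp

abbreviation mcomp :: "'o \<Rightarrow> 'o \<Rightarrow> 'o \<Rightarrow> 'm \<Rightarrow> 'm \<Rightarrow> 'm" where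
  "mcomp X Y Z g f \<equiv> kcomp Z g (kcomp (GO W Y) (Glift Y f) (delta W X))"

lemma mkl_comp_eq_mcomp:
  assumes "f \<in> arr A" "g \<in> arr A" "X \<in> obj A" "Y \<in> obj A" "Z \<in> obj A"
    and "src A f = GO W X" "tgt A f = TO T Y" "src A g = GO W Y" "tgt A g = TO T Z"
  shows "mkl_comp A T W X Y Z f g = mcomp X Y Z g f"
proof -
  have "cmp A (mu T Z) (cmp A (TA T (mu T Z)) k) = cmp A (mu T Z) (cmp A (mu T (TO T Z)) k)"
    if "k \<in> arr A" "tgt A k = TO T (TO T (TO T Z))" for k
    using cmp_permute[OF mu_assoc[of Z], of k] that assms by simp
  moreover have "cmp A (mu T (TO T Z)) (cmp A (TA T (TA T g)) k) = cmp A (TA T g) (cmp A (mu T (GO W Y)) k)"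
    if "k \<in> arr A" "tgt A k = TO T (TO T (GO W Y))" for k
    using cmp_permute[OF mu_nat[of g "GO W Y" "TO T Z"], of k] that assms by (simp add: hom_iff)
  ultimately show ?thesis unfolding mkl_comp_def kl_comp_def Gbar_def using assms by simp
qed

text \<open>The comonad laws, restated with an arbitrary Kleisli arrow \<open>k\<close> composed on the left so
  that they match the left-nested composites produced by rewriting with \<open>kcomp_assoc\<close>.\<close>

lemma eps_natural_comp:
  "f \<in> arr A \<Longrightarrow> Y \<in> obj A \<Longrightarrow> tgt A f = TO T Y \<Longrightarrow> k \<in> arr A \<Longrightarrow> V \<in> obj A \<Longrightarrow>
   src A k = Y \<Longrightarrow> tgt A k = TO T V \<Longrightarrow>
   kcomp V (kcomp V k (eps W Y)) (Glift Y f) = kcomp V (kcomp V k f) (eps W (src A f))"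
  by (rule kcomp_permute[OF eps_natural]) simp_all

lemma delta_natural_comp:
  "f \<in> arr A \<Longrightarrow> Y \<in> obj A \<Longrightarrow> tgt A f = TO T Y \<Longrightarrow> k \<in> arr A \<Longrightarrow> V \<in> obj A \<Longrightarrow>
   src A k = GO W (GO W Y) \<Longrightarrow> tgt A k = TO T V \<Longrightarrow>
   kcomp V (kcomp V k (delta W Y)) (Glift Y f)
   = kcomp V (kcomp V k (Glift (GO W Y) (Glift Y f))) (delta W (src A f))"
  by (rule kcomp_permute[OF delta_natural]) simp_all

lemma delta_counit_left_comp:
  "X \<in> obj A \<Longrightarrow> k \<in> arr A \<Longrightarrow> V \<in> obj A \<Longrightarrow> src A k = GO W X \<Longrightarrow> tgt A k = TO T V \<Longrightarrow>
   kcomp V (kcomp V k (eps W (GO W X))) (delta W X) = k"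
  using kcomp_reduce[OF delta_counit_left[of X], of k V] kcomp_eta_right[of k "GO W X" V] by simp

lemma delta_counit_right_comp:
  "X \<in> obj A \<Longrightarrow> k \<in> arr A \<Longrightarrow> V \<in> obj A \<Longrightarrow> src A k = GO W X \<Longrightarrow> tgt A k = TO T V \<Longrightarrow>
   kcomp V (kcomp V k (Glift X (eps W X))) (delta W X) = k"
  using kcomp_reduce[OF delta_counit_right[of X], of k V] kcomp_eta_right[of k "GO W X" V] by simp

lemma delta_coassoc_comp:
  "X \<in> obj A \<Longrightarrow> k \<in> arr A \<Longrightarrow> V \<in> obj A \<Longrightarrow> src A k = GO W (GO W (GO W X)) \<Longrightarrow> tgt A k = TO T V \<Longrightarrow>
   kcomp V (kcomp V k (delta W (GO W X))) (delta W X)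
   = kcomp V (kcomp V k (Glift (GO W (GO W X)) (delta W X))) (delta W X)"
  by (rule kcomp_permute[OF delta_coassoc]) simp_all

lemmas mcomp_simps = kcomp_assoc kcomp_eta_left kcomp_eta_right Glift_kcomp Glift_eta
  delta_counit_left delta_counit_right eps_natural eps_natural_comp delta_natural_comp
  delta_counit_left_comp delta_counit_right_comp delta_coassoc_comp

lemma mcomp_assoc:
  assumes "a \<in> arr A" "b \<in> arr A" "c \<in> arr A" "X \<in> obj A" "Y \<in> obj A" "Z \<in> obj A" "V \<in> obj A"
    and "src A a = GO W X" "tgt A a = TO T Y" "src A b = GO W Y" "tgt A b = TO T Z"
    and "src A c = GO W Z" "tgt A c = TO T V"
  shows "mcomp X Z V c (mcomp X Y Z b a) = mcomp X Y V (mcomp Y Z V c b) a"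
  using assms by (simp add: mcomp_simps)

lemma mcomp_eps_right:
  assumes "x \<in> arr A" "X \<in> obj A" "Y \<in> obj A" "src A x = GO W X" "tgt A x = TO T Y"
  shows "mcomp X X Y x (eps W X) = x"
  using assms by (simp add: mcomp_simps)

lemma mcomp_eps_left:
  assumes "x \<in> arr A" "X \<in> obj A" "Y \<in> obj A" "src A x = GO W X" "tgt A x = TO T Y"
  shows "mcomp X Y Y (eps W Y) x = x"
  using assms by (simp add: mcomp_simps)

text \<open>A Kleisli arrow \<open>h\<close> enters \<open>mkl\<close> as \<open>h \<circ> \<epsilon>\<close>; composing with it reduces to a Kleisli
  composite, with \<open>h\<close> lifted along \<open>G\<close> when it comes first.\<close>

lemma mcomp_kl_left:
  assumes "h \<in> arr A" "t \<in> arr A" "X \<in> obj A" "X' \<in> obj A" "Y \<in> obj A"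
    and "src A h = X" "tgt A h = TO T Y" "src A t = GO W X'" "tgt A t = TO T X"
  shows "mcomp X' X Y (kcomp Y h (eps W X)) t = kcomp Y h t"
  using assms by (simp add: mcomp_simps)

lemma mcomp_kl_right:
  assumes "h \<in> arr A" "t \<in> arr A" "X \<in> obj A" "Y \<in> obj A" "Z \<in> obj A"
    and "src A h = X" "tgt A h = TO T Y" "src A t = GO W Y" "tgt A t = TO T Z"
  shows "mcomp X Y Z t (kcomp Y h (eps W X)) = kcomp Z t (Glift Y h)"
  using assms by (simp add: mcomp_simps)

end

context opmonoidal_mixed_opwreath begin

lemma psi_arr [simp]: "X \<in> obj A \<Longrightarrow> Y \<in> obj A \<Longrightarrow> psi W X Y \<in> arr A"
  and psi_src [simp]: "X \<in> obj A \<Longrightarrow> Y \<in> obj A \<Longrightarrow> src A (psi W X Y) = GO W (tO A X Y)"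
  and psi_tgt [simp]: "X \<in> obj A \<Longrightarrow> Y \<in> obj A \<Longrightarrow> tgt A (psi W X Y) = TO T (tO A (GO W X) (GO W Y))"
  using psi_hom[of X Y] by (auto simp: hom_iff)

lemma psi0_arr [simp]: "psi0 W \<in> arr A"
  and psi0_src [simp]: "src A (psi0 W) = GO W (unt A)"
  and psi0_tgt [simp]: "tgt A (psi0 W) = TO T (unt A)"
  using psi0_hom by (auto simp: hom_iff)

abbreviation mtens :: "'o \<Rightarrow> 'o \<Rightarrow> 'o \<Rightarrow> 'o \<Rightarrow> 'm \<Rightarrow> 'm \<Rightarrow> 'm" where
  "mtens X X' Y Y' a b \<equiv> kcomp (tO A Y Y') (ktens Y Y' a b) (psi W X X')"

lemma psi_natural_comp:
  assumes "f \<in> arr A" "f' \<in> arr A" "Y \<in> obj A" "Y' \<in> obj A" "tgt A f = TO T Y" "tgt A f' = TO T Y'"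
    and "k \<in> arr A" "V \<in> obj A" "src A k = tO A (GO W Y) (GO W Y')" "tgt A k = TO T V"
  shows "kcomp V (kcomp V k (psi W Y Y')) (Glift (tO A Y Y') (ktens Y Y' f f'))
    = kcomp V (kcomp V k (ktens (GO W Y) (GO W Y') (Glift Y f) (Glift Y' f'))) (psi W (src A f) (src A f'))"
  by (rule kcomp_permute[OF psi_nat[of f "src A f" Y f' "src A f'" Y']])
    (use assms in \<open>simp_all add: hom_iff\<close>)

lemma delta_opmonoidal_comp:
  assumes "X \<in> obj A" "X' \<in> obj A" "k \<in> arr A" "V \<in> obj A"
    and "src A k = tO A (GO W (GO W X)) (GO W (GO W X'))" "tgt A k = TO T V"
  shows "kcomp V (kcomp V (kcomp V k (psi W (GO W X) (GO W X'))) (Glift (tO A (GO W X) (GO W X')) (psi W X X')))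
      (delta W (tO A X X'))
    = kcomp V (kcomp V k (ktens (GO W (GO W X)) (GO W (GO W X')) (delta W X) (delta W X'))) (psi W X X')"
proof -
  let ?Z = "tO A (GO W (GO W X)) (GO W (GO W X'))"
  have "kcomp V (kcomp V (kcomp V k (psi W (GO W X) (GO W X'))) (Glift (tO A (GO W X) (GO W X')) (psi W X X')))
      (delta W (tO A X X'))
    = kcomp V (kcomp V k (kcomp ?Z (psi W (GO W X) (GO W X')) (Glift (tO A (GO W X) (GO W X')) (psi W X X'))))
      (delta W (tO A X X'))"
    using assms by (simp add: kcomp_assoc)
  also have "\<dots> = kcomp V (kcomp V k (ktens (GO W (GO W X)) (GO W (GO W X')) (delta W X) (delta W X')))
      (psi W X X')"
    by (rule kcomp_permute[OF delta_opmon[OF assms(1,2)]]) (use assms in simp_all)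
  finally show ?thesis .
qed

lemma mtens_interchange:
  assumes "a \<in> arr A" "b \<in> arr A" "a' \<in> arr A" "b' \<in> arr A"
    and "X \<in> obj A" "X' \<in> obj A" "Y \<in> obj A" "Y' \<in> obj A" "Z \<in> obj A" "Z' \<in> obj A"
    and "src A a = GO W X" "tgt A a = TO T Y" "src A b = GO W X'" "tgt A b = TO T Y'"
    and "src A a' = GO W Y" "tgt A a' = TO T Z" "src A b' = GO W Y'" "tgt A b' = TO T Z'"
  shows "mcomp (tO A X X') (tO A Y Y') (tO A Z Z') (mtens Y Y' Z Z' a' b') (mtens X X' Y Y' a b)
    = mtens X X' Z Z' (mcomp X Y Z a' a) (mcomp X' Y' Z' b' b)"
  using assms by (simp add: mcomp_simps ktens_interchange psi_natural_comp delta_opmonoidal_comp)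

abbreviation mru :: "'o \<Rightarrow> 'm" where
  "mru X \<equiv> kcomp X (kl_ru A T X) (eps W (tO A X (unt A)))"

abbreviation mlu :: "'o \<Rightarrow> 'm" where
  "mlu X \<equiv> kcomp X (kl_lu A T X) (eps W (tO A (unt A) X))"

text \<open>Naturality of the unitors in \<open>mkl\<close>: this is where the counitality of \<open>\<psi>\<close> and
  \<open>\<epsilon>\<^sub>I = \<psi>\<^sub>0\<close> enter.\<close>

lemma mcomp_mru_natural:
  assumes "a \<in> arr A" "X \<in> obj A" "Y \<in> obj A" "src A a = GO W X" "tgt A a = TO T Y"
  shows "mcomp (tO A X (unt A)) X Y a (mru X)
    = mcomp (tO A X (unt A)) (tO A Y (unt A)) Y (mru Y) (mtens X (unt A) Y (unt A) a (eps W (unt A)))"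
proof -
  let ?I = "unt A"
  let ?c = "ktens (GO W X) ?I (eta T (GO W X)) (psi0 W)"
  have "mcomp (tO A X ?I) X Y a (mru X) = kcomp Y a (Glift X (kl_ru A T X))"
    using mcomp_kl_right[of "kl_ru A T X" a "tO A X ?I" X Y] assms by simp
  also have "\<dots> = kcomp Y a (kcomp (GO W X) (kl_ru A T (GO W X)) (kcomp (tO A (GO W X) ?I) ?c (psi W X ?I)))"
    using psi_rcounit[of X] assms by simp
  also have "\<dots> = kcomp Y (kcomp Y (kcomp Y a (kl_ru A T (GO W X))) ?c) (psi W X ?I)"
    using assms by (simp add: kcomp_assoc)
  also have "\<dots> = kcomp Y (kcomp Y (kcomp Y (kl_ru A T Y) (ktens Y ?I a (eta T ?I))) ?c) (psi W X ?I)"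
    using kl_ru_natural[of a "GO W X" Y] assms by simp
  also have "\<dots> = kcomp Y (kcomp Y (kl_ru A T Y) (kcomp (tO A Y ?I) (ktens Y ?I a (eta T ?I)) ?c)) (psi W X ?I)"
    using assms by (simp add: kcomp_assoc)
  also have "\<dots> = kcomp Y (kcomp Y (kl_ru A T Y) (ktens Y ?I a (psi0 W))) (psi W X ?I)"
    using assms by (simp add: ktens_interchange kcomp_eta_left kcomp_eta_right)
  also have "\<dots> = mcomp (tO A X ?I) (tO A Y ?I) Y (mru Y) (mtens X ?I Y ?I a (eps W ?I))"
    using mcomp_kl_left[of "kl_ru A T Y" "mtens X ?I Y ?I a (eps W ?I)" "tO A Y ?I" "tO A X ?I" Y]
      assms eps_opmon0
    by (simp add: kcomp_assoc)
  finally show ?thesis .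
qed

lemma mcomp_mlu_natural:
  assumes "a \<in> arr A" "X \<in> obj A" "Y \<in> obj A" "src A a = GO W X" "tgt A a = TO T Y"
  shows "mcomp (tO A (unt A) X) X Y a (mlu X)
    = mcomp (tO A (unt A) X) (tO A (unt A) Y) Y (mlu Y) (mtens (unt A) X (unt A) Y (eps W (unt A)) a)"
proof -
  let ?I = "unt A"
  let ?c = "ktens ?I (GO W X) (psi0 W) (eta T (GO W X))"
  have "mcomp (tO A ?I X) X Y a (mlu X) = kcomp Y a (Glift X (kl_lu A T X))"
    using mcomp_kl_right[of "kl_lu A T X" a "tO A ?I X" X Y] assms by simp
  also have "\<dots> = kcomp Y a (kcomp (GO W X) (kl_lu A T (GO W X)) (kcomp (tO A ?I (GO W X)) ?c (psi W ?I X)))"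
    using psi_lcounit[of X] assms by simp
  also have "\<dots> = kcomp Y (kcomp Y (kcomp Y a (kl_lu A T (GO W X))) ?c) (psi W ?I X)"
    using assms by (simp add: kcomp_assoc)
  also have "\<dots> = kcomp Y (kcomp Y (kcomp Y (kl_lu A T Y) (ktens ?I Y (eta T ?I) a)) ?c) (psi W ?I X)"
    using kl_lu_natural[of a "GO W X" Y] assms by simp
  also have "\<dots> = kcomp Y (kcomp Y (kl_lu A T Y) (kcomp (tO A ?I Y) (ktens ?I Y (eta T ?I) a) ?c)) (psi W ?I X)"
    using assms by (simp add: kcomp_assoc)
  also have "\<dots> = kcomp Y (kcomp Y (kl_lu A T Y) (ktens ?I Y (psi0 W) a)) (psi W ?I X)"
    using assms by (simp add: ktens_interchange kcomp_eta_left kcomp_eta_right)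
  also have "\<dots> = mcomp (tO A ?I X) (tO A ?I Y) Y (mlu Y) (mtens ?I X ?I Y (eps W ?I) a)"
    using mcomp_kl_left[of "kl_lu A T Y" "mtens ?I X ?I Y (eps W ?I) a" "tO A ?I Y" "tO A ?I X" Y]
      assms eps_opmon0
    by (simp add: kcomp_assoc)
  finally show ?thesis .
qed

lemma mru_cancel:
  assumes "X \<in> obj A" "Y \<in> obj A"
    and "x \<in> arr A" "src A x = GO W X" "tgt A x = TO T Y"
    and "y \<in> arr A" "src A y = GO W X" "tgt A y = TO T Y"
    and "mcomp (tO A X (unt A)) X Y x (mru X) = mcomp (tO A X (unt A)) X Y y (mru X)"
  shows "x = y"
proof -
  let ?XI = "tO A X (unt A)"
  obtain g where g: "g \<in> arr A" "src A g = X" "tgt A g = ?XI" "cmp A (ru A X) g = idt A X"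
    using is_isoE[OF ru_iso[OF assms(1)]] assms(1) by (metis ru_src ru_tgt)
  let ?v = "kcomp ?XI (cmp A (eta T ?XI) g) (eps W X)"
  have mru_v: "mcomp X ?XI X (mru X) ?v = eps W X"
  proof -
    have "mcomp X ?XI X (mru X) ?v = kcomp X (kl_ru A T X) ?v"
      using mcomp_kl_left[of "kl_ru A T X" ?v ?XI X X] g assms(1) by simp
    also have "\<dots> = kcomp X (kcomp X (kl_ru A T X) (cmp A (eta T ?XI) g)) (eps W X)"
      using g assms(1) by (simp add: kcomp_assoc)
    also have "\<dots> = eps W X"
      using kl_ru_section[OF assms(1) g] kcomp_eta_left[of "eps W X" X] assms(1) by simp
    finally show ?thesis .
  qed
  have "z = mcomp X ?XI Y (mcomp ?XI X Y z (mru X)) ?v"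
    if "z \<in> arr A" "src A z = GO W X" "tgt A z = TO T Y" for z
  proof -
    have "z = mcomp X X Y z (mcomp X ?XI X (mru X) ?v)"
      using mcomp_eps_right[of z X Y] mru_v that assms(1,2) by simp
    also have "\<dots> = mcomp X ?XI Y (mcomp ?XI X Y z (mru X)) ?v"
      using mcomp_assoc[of ?v "mru X" z X ?XI X Y] that g assms(1,2) by simp
    finally show ?thesis .
  qed
  then show ?thesis using assms by metis
qed

lemma mlu_unit_eq_mru_unit: "mlu (unt A) = mru (unt A)"
  unfolding kl_lu_def kl_ru_def using lu_unit_eq_ru_unit by simp

lemma mcomp_mru_unit_conj:
  assumes x: "x \<in> arr A" "src A x = GO W (unt A)" "tgt A x = TO T (unt A)"
    and y: "y \<in> arr A" "src A y = GO W (unt A)" "tgt A y = TO T (unt A)"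
    and p: "p \<in> arr A" "src A p = GO W (tO A (unt A) (unt A))" "tgt A p = TO T (tO A (unt A) (unt A))"
    and q: "q \<in> arr A" "src A q = GO W (tO A (unt A) (unt A))" "tgt A q = TO T (tO A (unt A) (unt A))"
    and xp: "mcomp (tO A (unt A) (unt A)) (unt A) (unt A) x (mru (unt A))
      = mcomp (tO A (unt A) (unt A)) (tO A (unt A) (unt A)) (unt A) (mru (unt A)) p"
    and yq: "mcomp (tO A (unt A) (unt A)) (unt A) (unt A) y (mru (unt A))
      = mcomp (tO A (unt A) (unt A)) (tO A (unt A) (unt A)) (unt A) (mru (unt A)) q"
  shows "mcomp (tO A (unt A) (unt A)) (unt A) (unt A) (mcomp (unt A) (unt A) (unt A) y x) (mru (unt A))
    = mcomp (tO A (unt A) (unt A)) (tO A (unt A) (unt A)) (unt A) (mru (unt A))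
        (mcomp (tO A (unt A) (unt A)) (tO A (unt A) (unt A)) (tO A (unt A) (unt A)) q p)"
proof -
  let ?I = "unt A"
  let ?II = "tO A ?I ?I"
  have "mcomp ?II ?I ?I (mcomp ?I ?I ?I y x) (mru ?I) = mcomp ?II ?I ?I y (mcomp ?II ?II ?I (mru ?I) p)"
    using mcomp_assoc[of "mru ?I" x y ?II ?I ?I ?I] xp x y by simp
  also have "\<dots> = mcomp ?II ?II ?I (mcomp ?II ?II ?I (mru ?I) q) p"
    using mcomp_assoc[of p "mru ?I" y ?II ?II ?I ?I] yq y p by simp
  also have "\<dots> = mcomp ?II ?II ?I (mru ?I) (mcomp ?II ?II ?II q p)"
    using mcomp_assoc[of p q "mru ?I" ?II ?II ?II ?I] p q by simp
  finally show ?thesis .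
qed

text \<open>Eckmann--Hilton: both \<open>x \<otimes> 1\<close> and \<open>1 \<otimes> x\<close> can be traded for \<open>x\<close> across \<open>mru I\<close>,
  because \<open>\<lambda>\<^sub>I = \<rho>\<^sub>I\<close>.\<close>

lemma mcomp_mru_unit_tensor:
  assumes x: "x \<in> arr A" "src A x = GO W (unt A)" "tgt A x = TO T (unt A)"
    and y: "y \<in> arr A" "src A y = GO W (unt A)" "tgt A y = TO T (unt A)"
  shows "mcomp (tO A (unt A) (unt A)) (unt A) (unt A) (mcomp (unt A) (unt A) (unt A) y x) (mru (unt A))
      = mcomp (tO A (unt A) (unt A)) (tO A (unt A) (unt A)) (unt A) (mru (unt A))
          (mtens (unt A) (unt A) (unt A) (unt A) x y)"
    and "mcomp (tO A (unt A) (unt A)) (unt A) (unt A) (mcomp (unt A) (unt A) (unt A) y x) (mru (unt A))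
      = mcomp (tO A (unt A) (unt A)) (tO A (unt A) (unt A)) (unt A) (mru (unt A))
          (mtens (unt A) (unt A) (unt A) (unt A) y x)"
proof -
  let ?I = "unt A"
  let ?e = "eps W ?I"
  have I: "?I \<in> obj A" by simp
  note right = mcomp_mru_natural[OF _ I I]
  note left = mcomp_mlu_natural[OF _ I I, unfolded mlu_unit_eq_mru_unit]
  have "mtens ?I ?I ?I ?I x y = mcomp (tO A ?I ?I) (tO A ?I ?I) (tO A ?I ?I)
      (mtens ?I ?I ?I ?I ?e y) (mtens ?I ?I ?I ?I x ?e)"
    using mtens_interchange[of x ?e ?e y ?I ?I ?I ?I ?I ?I] mcomp_eps_left[of x ?I ?I]
      mcomp_eps_right[of y ?I ?I] x y by simp
  then show "mcomp (tO A ?I ?I) ?I ?I (mcomp ?I ?I ?I y x) (mru ?I)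
      = mcomp (tO A ?I ?I) (tO A ?I ?I) ?I (mru ?I) (mtens ?I ?I ?I ?I x y)"
    using mcomp_mru_unit_conj[OF x y _ _ _ _ _ _ right[OF x] left[OF y]] x y by simp
  have "mtens ?I ?I ?I ?I y x = mcomp (tO A ?I ?I) (tO A ?I ?I) (tO A ?I ?I)
      (mtens ?I ?I ?I ?I y ?e) (mtens ?I ?I ?I ?I ?e x)"
    using mtens_interchange[of ?e x y ?e ?I ?I ?I ?I ?I ?I] mcomp_eps_left[of x ?I ?I]
      mcomp_eps_right[of y ?I ?I] x y by simp
  then show "mcomp (tO A ?I ?I) ?I ?I (mcomp ?I ?I ?I y x) (mru ?I)
      = mcomp (tO A ?I ?I) (tO A ?I ?I) ?I (mru ?I) (mtens ?I ?I ?I ?I y x)"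
    using mcomp_mru_unit_conj[OF x y _ _ _ _ _ _ left[OF x] right[OF y]] x y by simp
qed

end

theorem corollary5p2:
  fixes A :: "('o, 'm) moncat" and T :: "('o, 'm) monmonad" and W :: "('o, 'm) opwreath"
  assumes "opmonoidal_mixed_opwreath A T W"
    and "f \<in> mkl_hom A T W (unt A) (unt A)"
    and "g \<in> mkl_hom A T W (unt A) (unt A)"
  shows "mkl_comp A T W (unt A) (unt A) (unt A) f g = mkl_comp A T W (unt A) (unt A) (unt A) g f"
proof -
  interpret opmonoidal_mixed_opwreath A T W by (rule assms(1))
  let ?I = "unt A"
  have f: "f \<in> arr A" "src A f = GO W ?I" "tgt A f = TO T ?I"
    and g: "g \<in> arr A" "src A g = GO W ?I" "tgt A g = TO T ?I"
    using assms(2,3) unfolding mkl_hom_def hom_def by auto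
  have "mcomp (tO A ?I ?I) ?I ?I (mcomp ?I ?I ?I g f) (mru ?I)
      = mcomp (tO A ?I ?I) ?I ?I (mcomp ?I ?I ?I f g) (mru ?I)"
    using mcomp_mru_unit_tensor(1)[OF f g] mcomp_mru_unit_tensor(2)[OF g f] by simp
  then have "mcomp ?I ?I ?I g f = mcomp ?I ?I ?I f g"
    by (rule mru_cancel[rotated 8]) (use f g in simp_all)
  then show ?thesis
    using mkl_comp_eq_mcomp[of f g ?I ?I ?I] mkl_comp_eq_mcomp[of g f ?I ?I ?I] f g by simp
qed

end
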